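(* Let $h:\mathbb{R}_{\geq0}\times\mathbb{R}^n\to\mathbb{R}_{\geq0}$ be continuous and $K\subset\mathbb{R}^n$ closed. Assume (i) for all $t\ge0$ and $x\in\mathbb{R}^n$, $h(t,x)=0$ if and only if $x\in K$; (ii) $t\mapsto h(t,x)$ is nonincreasing for each $x\in\mathbb{R}^n$. Then there exists a continuous $g:\mathbb{R}_{\geq0}\times\mathbb{R}^n\to\mathbb{R}_{\geq0}$ such that (1) $g$ is of class $\mathcal{C}^1$ on $\mathbb{R}_{\geq0}\times(\mathbb{R}^n\setminus K)$; (2) $\tfrac12 h(t,x)\le g(t,x)\le2h(t,x)$ for all $(t,x)\in\mathbb{R}_{\geq0}\times\mathbb{R}^n$; (3) $t\mapsto g(t,x)$ is nonincreasing for each $x\in\mathbb{R}^n$. *)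

theory Defs
  imports "HOL-Analysis.Analysis"
begin

end

theory Submission
  imports Defs
begin

(*
  Off K put \<phi> = ln h, which is continuous and nonincreasing in t.  It suffices to find a
  C^1 function \<psi>, nonincreasing in t, with |\<psi> - \<phi>| \<le> 1/2 on [0,\<infinity>) \<times> (R^n - K): then
  g = exp \<psi> off K and g = 0 on K satisfies h/2 \<le> g \<le> 2h because exp (1/2) \<le> 2, and g is
  continuous at the points of K because it is squeezed between 0 and 2h.

  On each time strip [0, k + 3], \<phi> is approximated by a spatial partition-of-unity average
  \<Sum>i w_i \<beta>_i(x) c_i(t) / \<Sum>i w_i \<beta>_i(x): the bumps \<beta>_i sit on countably many balls on which
  \<phi> varies little, the time profiles c_i are moving averages of \<phi>(., y_i) and hence C^1 and
  nonincreasing, and the weights w_i are small enough for both series to converge in C^1.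
  Since the weights do not depend on t, the average is nonincreasing in t.  These strip
  approximations, shifted so that consecutive ones are ordered on their overlaps, are finally
  glued in time by a monotone C^1 step function.
*)

section \<open>Continuously differentiable real-valued functions\<close>

(* The derivative at x is given as the function f' x of the direction; its continuity is
   required direction by direction, which on finite-dimensional domains is continuity in
   operator norm (has_C1_derivative_imp_blinfun). *)
definition has_C1_derivative :: "('a::real_normed_vector \<Rightarrow> real) \<Rightarrow> ('a \<Rightarrow> 'a \<Rightarrow> real) \<Rightarrow> 'a set \<Rightarrow> bool"
  where "has_C1_derivative f f' S \<longleftrightarrow>
    (\<forall>x\<in>S. (f has_derivative f' x) (at x within S)) \<and> (\<forall>v. continuous_on S (\<lambda>x. f' x v))"

lemma has_C1_derivativeI:
  assumes "\<And>x. x \<in> S \<Longrightarrow> (f has_derivative f' x) (at x within S)"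
    and "\<And>v. continuous_on S (\<lambda>x. f' x v)"
  shows "has_C1_derivative f f' S"
  using assms by (simp add: has_C1_derivative_def)

lemma has_C1_derivativeD:
  assumes "has_C1_derivative f f' S"
  shows "x \<in> S \<Longrightarrow> (f has_derivative f' x) (at x within S)"
    and "continuous_on S (\<lambda>x. f' x v)"
  using assms by (auto simp: has_C1_derivative_def)

lemma has_C1_derivative_imp_continuous_on:
  "has_C1_derivative f f' S \<Longrightarrow> continuous_on S f"
  unfolding continuous_on_eq_continuous_within
  by (meson has_C1_derivativeD(1) has_derivative_continuous)

lemma has_C1_derivative_subset:
  "has_C1_derivative f f' S \<Longrightarrow> T \<subseteq> S \<Longrightarrow> has_C1_derivative f f' T"
  unfolding has_C1_derivative_def
  by (meson continuous_on_subset has_derivative_subset subsetD)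

lemma has_C1_derivative_cong:
  assumes "has_C1_derivative f f' S"
    and "\<And>x. x \<in> S \<Longrightarrow> g x = f x" and "\<And>x. x \<in> S \<Longrightarrow> g' x = f' x"
  shows "has_C1_derivative g g' S"
proof (rule has_C1_derivativeI)
  show "(g has_derivative g' x) (at x within S)" if "x \<in> S" for x
    using has_derivative_transform_within[OF has_C1_derivativeD(1)[OF assms(1) that] zero_less_one that]
      assms(2,3) that by auto
  show "continuous_on S (\<lambda>x. g' x v)" for v
    using continuous_on_eq[OF has_C1_derivativeD(2)[OF assms(1)]] assms(3) by auto
qed

lemma has_C1_derivative_local:
  assumes "\<And>x. x \<in> S \<Longrightarrow> \<exists>V. open V \<and> x \<in> V \<and> has_C1_derivative f f' (S \<inter> V)"
  shows "has_C1_derivative f f' S"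
proof -
  have "(f has_derivative f' x) (at x within S) \<and> continuous (at x within S) (\<lambda>x. f' x v)"
    if "x \<in> S" for x v
  proof -
    obtain V where "open V" "x \<in> V" and C1: "has_C1_derivative f f' (S \<inter> V)"
      using assms[OF \<open>x \<in> S\<close>] by blast
    then have "at x within S \<inter> V = at x within S"
      by (intro at_within_nhd[of x V]) auto
    moreover have "x \<in> S \<inter> V"
      using that \<open>x \<in> V\<close> by blast
    ultimately show ?thesis
      using C1 unfolding has_C1_derivative_def continuous_on_eq_continuous_within by metis
  qed
  then show ?thesis
    unfolding has_C1_derivative_def continuous_on_eq_continuous_within by blast
qed

lemma has_C1_derivative_add:
  assumes "has_C1_derivative f f' S" "has_C1_derivative g g' S"
  shows "has_C1_derivative (\<lambda>x. f x + g x) (\<lambda>x v. f' x v + g' x v) S"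
  using assms unfolding has_C1_derivative_def by (auto intro: has_derivative_add continuous_intros)

lemma has_C1_derivative_diff:
  assumes "has_C1_derivative f f' S" "has_C1_derivative g g' S"
  shows "has_C1_derivative (\<lambda>x. f x - g x) (\<lambda>x v. f' x v - g' x v) S"
  using assms unfolding has_C1_derivative_def by (auto intro: has_derivative_diff continuous_intros)

lemma has_C1_derivative_add_const:
  "has_C1_derivative f f' S \<Longrightarrow> has_C1_derivative (\<lambda>x. f x + c) f' S"
  unfolding has_C1_derivative_def by (auto intro: has_derivative_add_const)

lemma has_C1_derivative_const_mult:
  "has_C1_derivative f f' S \<Longrightarrow> has_C1_derivative (\<lambda>x. c * f x) (\<lambda>x v. c * f' x v) S"
  unfolding has_C1_derivative_def
  by (auto intro: has_derivative_mult_right continuous_intros)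

lemma has_C1_derivative_mult:
  assumes "has_C1_derivative f f' S" "has_C1_derivative g g' S"
  shows "has_C1_derivative (\<lambda>x. f x * g x) (\<lambda>x v. f x * g' x v + f' x v * g x) S"
proof (rule has_C1_derivativeI)
  show "((\<lambda>x. f x * g x) has_derivative (\<lambda>v. f x * g' x v + f' x v * g x)) (at x within S)"
    if "x \<in> S" for x
    using has_derivative_mult[OF has_C1_derivativeD(1)[OF assms(1) that] has_C1_derivativeD(1)[OF assms(2) that]] .
  show "continuous_on S (\<lambda>x. f x * g' x v + f' x v * g x)" for v
    using has_C1_derivative_imp_continuous_on[OF assms(1)] has_C1_derivative_imp_continuous_on[OF assms(2)]
      has_C1_derivativeD(2)[OF assms(1)] has_C1_derivativeD(2)[OF assms(2)]
    by (intro continuous_intros)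
qed

lemma has_C1_derivative_divide:
  assumes "has_C1_derivative f f' S" "has_C1_derivative g g' S" "\<And>x. x \<in> S \<Longrightarrow> g x \<noteq> 0"
  shows "has_C1_derivative (\<lambda>x. f x / g x) (\<lambda>x v. (f' x v * g x - f x * g' x v) / (g x * g x)) S"
proof (rule has_C1_derivativeI)
  show "((\<lambda>x. f x / g x) has_derivative (\<lambda>v. (f' x v * g x - f x * g' x v) / (g x * g x))) (at x within S)"
    if "x \<in> S" for x
    using has_derivative_divide'[OF has_C1_derivativeD(1)[OF assms(1) that]
        has_C1_derivativeD(1)[OF assms(2) that] assms(3)[OF that]] .
  show "continuous_on S (\<lambda>x. (f' x v * g x - f x * g' x v) / (g x * g x))" for v
    using assms has_C1_derivative_imp_continuous_on[OF assms(1)] has_C1_derivative_imp_continuous_on[OF assms(2)]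
    by (intro continuous_intros) (auto dest: has_C1_derivativeD)
qed

lemma has_C1_derivative_exp:
  assumes "has_C1_derivative f f' S"
  shows "has_C1_derivative (\<lambda>x. exp (f x)) (\<lambda>x v. exp (f x) * f' x v) S"
proof (rule has_C1_derivativeI)
  show "((\<lambda>x. exp (f x)) has_derivative (\<lambda>v. exp (f x) * f' x v)) (at x within S)" if "x \<in> S" for x
    using has_derivative_compose[OF has_C1_derivativeD(1)[OF assms that]
        DERIV_exp[unfolded has_field_derivative_def]] by simp
  show "continuous_on S (\<lambda>x. exp (f x) * f' x v)" for v
    using has_C1_derivative_imp_continuous_on[OF assms] has_C1_derivativeD(2)[OF assms]
    by (intro continuous_intros)
qed

lemma has_C1_derivative_imp_blinfun:
  fixes f :: "'a::euclidean_space \<Rightarrow> real"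
  assumes "has_C1_derivative f f' S"
  shows "\<exists>D :: 'a \<Rightarrow> 'a \<Rightarrow>\<^sub>L real.
           (\<forall>x\<in>S. (f has_derivative blinfun_apply (D x)) (at x within S)) \<and> continuous_on S D"
proof (intro exI conjI ballI)
  have D: "blinfun_apply (Blinfun (f' x)) = f' x" if "x \<in> S" for x
    using bounded_linear_Blinfun_apply has_derivative_bounded_linear has_C1_derivativeD(1)[OF assms that]
    by blast
  show "(f has_derivative blinfun_apply (Blinfun (f' x))) (at x within S)" if "x \<in> S" for x
    using D has_C1_derivativeD(1)[OF assms] that by simp
  show "continuous_on S (\<lambda>x. Blinfun (f' x))"
  proof (rule continuous_on_blinfun_componentwise)
    fix v :: 'a
    show "continuous_on S (\<lambda>x. blinfun_apply (Blinfun (f' x)) v)"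
      using continuous_on_eq[OF has_C1_derivativeD(2)[OF assms, of v]] D by simp
  qed
qed

lemma Mtest_derivative_tail:
  fixes f' :: "nat \<Rightarrow> 'a \<Rightarrow> 'b::real_normed_vector \<Rightarrow> real"
  assumes f'_bound: "\<And>n x v. x \<in> S \<Longrightarrow> \<bar>f' n x v\<bar> \<le> m n * norm v"
    and "summable m" "0 < e"
  shows "\<forall>\<^sub>F n in sequentially. \<forall>x\<in>S. \<forall>v. norm ((\<Sum>i<n. f' i x v) - (\<Sum>i. f' i x v)) \<le> e * norm v"
proof -
  obtain N where N: "\<And>n. n \<ge> N \<Longrightarrow> norm (\<Sum>i. m (i + n)) < e"
    using suminf_exist_split[OF \<open>0 < e\<close> \<open>summable m\<close>] by blast
  have "norm ((\<Sum>i<n. f' i x v) - (\<Sum>i. f' i x v)) \<le> e * norm v" if "N \<le> n" "x \<in> S" for n x v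
  proof -
    have tail: "summable (\<lambda>i. m (i + n) * norm v)"
      using \<open>summable m\<close> by (simp add: summable_iff_shift summable_mult2)
    have tail_f': "summable (\<lambda>i. norm (f' (i + n) x v))"
      by (rule summable_comparison_test[OF _ tail]) (use f'_bound[OF \<open>x \<in> S\<close>] in auto)
    then have "summable (\<lambda>i. f' i x v)"
      using summable_norm_cancel summable_iff_shift by blast
    then have "norm ((\<Sum>i<n. f' i x v) - (\<Sum>i. f' i x v)) = \<bar>\<Sum>i. f' (i + n) x v\<bar>"
      using suminf_split_initial_segment[of "\<lambda>i. f' i x v" n] by simp
    also have "\<dots> \<le> (\<Sum>i. norm (f' (i + n) x v))"
      using summable_norm[OF tail_f'] by simp
    also have "\<dots> \<le> (\<Sum>i. m (i + n) * norm v)"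
      by (rule suminf_le[OF _ tail_f' tail]) (use f'_bound[OF \<open>x \<in> S\<close>] in auto)
    also have "\<dots> = (\<Sum>i. m (i + n)) * norm v"
      using \<open>summable m\<close> by (simp add: summable_iff_shift suminf_mult2)
    also have "\<dots> \<le> e * norm v"
      using N[OF \<open>N \<le> n\<close>] by (intro mult_right_mono) auto
    finally show ?thesis .
  qed
  then show ?thesis
    unfolding eventually_sequentially by blast
qed

lemma
  fixes f :: "nat \<Rightarrow> 'a::real_normed_vector \<Rightarrow> real"
  assumes "convex S"
    and f: "\<And>n. has_C1_derivative (f n) (f' n) S"
    and f_bound: "\<And>n x. x \<in> S \<Longrightarrow> \<bar>f n x\<bar> \<le> m n"
    and f'_bound: "\<And>n x v. x \<in> S \<Longrightarrow> \<bar>f' n x v\<bar> \<le> m n * norm v"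
    and "summable m"
  shows has_C1_derivative_suminf: "has_C1_derivative (\<lambda>x. \<Sum>n. f n x) (\<lambda>x v. \<Sum>n. f' n x v) S"
    and has_C1_derivative_suminf_summable: "x \<in> S \<Longrightarrow> summable (\<lambda>n. f n x)"
proof -
  have summable_f: "summable (\<lambda>n. f n x)" if "x \<in> S" for x
    by (rule summable_comparison_test[OF _ \<open>summable m\<close>]) (use f_bound[OF that] in auto)
  then show "x \<in> S \<Longrightarrow> summable (\<lambda>n. f n x)" .
  show "has_C1_derivative (\<lambda>x. \<Sum>n. f n x) (\<lambda>x v. \<Sum>n. f' n x v) S"
  proof (rule has_C1_derivativeI)
    show "continuous_on S (\<lambda>x. \<Sum>n. f' n x v)" for v
    proof (rule uniform_limit_theorem[OF _ Weierstrass_m_test[where M="\<lambda>n. m n * norm v"]])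
      show "\<forall>\<^sub>F n in sequentially. continuous_on S (\<lambda>x. \<Sum>i<n. f' i x v)"
        using has_C1_derivativeD(2)[OF f] by (intro always_eventually allI continuous_on_sum)
    qed (use f'_bound summable_mult2[OF \<open>summable m\<close>] in auto)
    fix x assume "x \<in> S"
    obtain g where g: "\<forall>x\<in>S. (\<lambda>n. f n x) sums g x \<and> (g has_derivative (\<lambda>v. \<Sum>n. f' n x v)) (at x within S)"
      using has_derivative_series[OF \<open>convex S\<close> has_C1_derivativeD(1)[OF f]
          Mtest_derivative_tail[OF f'_bound \<open>summable m\<close>] \<open>x \<in> S\<close>
          summable_sums[OF summable_f[OF \<open>x \<in> S\<close>]]]
      by blast
    then have "(g has_derivative (\<lambda>v. \<Sum>n. f' n x v)) (at x within S)"
      using \<open>x \<in> S\<close> by blast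
    moreover have "\<And>y. y \<in> S \<Longrightarrow> g y = (\<Sum>n. f n y)"
      using g sums_unique by blast
    ultimately show "((\<lambda>x. \<Sum>n. f n x) has_derivative (\<lambda>v. \<Sum>n. f' n x v)) (at x within S)"
      by (rule has_derivative_transform_within[OF _ zero_less_one \<open>x \<in> S\<close>]) auto
  qed
qed

lemma has_C1_derivative_fst:
  assumes "\<And>t. t \<in> I \<Longrightarrow> (c has_real_derivative c' t) (at t)" "continuous_on I c'"
  shows "has_C1_derivative (\<lambda>p. c (fst p)) (\<lambda>p v. c' (fst p) * fst v) (I \<times> (UNIV :: 'a::real_normed_vector set))"
proof (rule has_C1_derivativeI)
  show "((\<lambda>p. c (fst p)) has_derivative (\<lambda>v. c' (fst p) * fst v)) (at p within I \<times> UNIV)"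
    if "p \<in> I \<times> (UNIV :: 'a set)" for p
    using has_derivative_compose[OF has_derivative_fst[OF has_derivative_ident]
        assms(1)[unfolded has_field_derivative_def]] that by (auto simp: mult.commute)
  show "continuous_on (I \<times> UNIV) (\<lambda>p. c' (fst p) * fst v)" for v :: "real \<times> 'a"
    by (intro continuous_intros continuous_on_compose2[OF assms(2)]) auto
qed

section \<open>Smooth step and bump functions\<close>

definition pos_sq :: "real \<Rightarrow> real" where "pos_sq v = (max 0 v)\<^sup>2"
definition pos_sq' :: "real \<Rightarrow> real" where "pos_sq' v = 2 * max 0 v"

lemma pos_sq_has_real_derivative: "(pos_sq has_real_derivative pos_sq' v) (at v)"
proof -
  consider "v < 0" | "v > 0" | "v = 0" by linarith
  then show ?thesis
  proof cases
    case 1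
    then have "\<forall>\<^sub>F x in nhds v. pos_sq x = 0"
      by (intro eventually_nhds_in_open[of "{..<0}", THEN eventually_mono]) (auto simp: pos_sq_def)
    with 1 show ?thesis
      by (subst DERIV_cong_ev[OF refl _ refl]) (auto simp: pos_sq'_def)
  next
    case 2
    then have "\<forall>\<^sub>F x in nhds v. pos_sq x = x\<^sup>2"
      by (intro eventually_nhds_in_open[of "{0<..}", THEN eventually_mono]) (auto simp: pos_sq_def)
    moreover have "((\<lambda>x. x\<^sup>2) has_real_derivative 2 * v) (at v)"
      by (auto intro!: derivative_eq_intros)
    ultimately show ?thesis
      using 2 by (subst DERIV_cong_ev[OF refl _ refl]) (auto simp: pos_sq'_def)
  next
    case 3
    have "norm (pos_sq y / y) \<le> \<bar>y\<bar>" for y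
      unfolding pos_sq_def by (cases "y \<le> 0") (auto simp: power2_eq_square abs_mult)
    then have "((\<lambda>y. pos_sq y / y) \<longlongrightarrow> 0) (at 0)"
      by (intro Lim_null_comparison[OF always_eventually tendsto_rabs_zero[OF tendsto_ident_at]]) auto
    then show ?thesis
      unfolding has_field_derivative_iff 3 by (simp add: pos_sq_def pos_sq'_def)
  qed
qed

lemma continuous_on_pos_sq: "continuous_on S pos_sq" "continuous_on S pos_sq'"
  unfolding pos_sq_def pos_sq'_def by (intro continuous_intros)+

lemma pos_sq_nonneg: "0 \<le> pos_sq v"
  by (simp add: pos_sq_def)

lemma pos_sq_mono: "u \<le> v \<Longrightarrow> pos_sq u \<le> pos_sq v"
  unfolding pos_sq_def by (intro power_mono) auto

lemma pos_sq_eq_0: "v \<le> 0 \<Longrightarrow> pos_sq v = 0" "v \<le> 0 \<Longrightarrow> pos_sq' v = 0"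
  by (auto simp: pos_sq_def pos_sq'_def)

lemma pos_sq_pos: "0 < v \<Longrightarrow> 0 < pos_sq v"
  by (simp add: pos_sq_def)

definition smooth_step :: "real \<Rightarrow> real" where
  "smooth_step u = pos_sq (3 * u - 1) / (pos_sq (3 * u - 1) + pos_sq (2 - 3 * u))"

definition smooth_step' :: "real \<Rightarrow> real" where
  "smooth_step' u = 3 * (pos_sq' (3 * u - 1) * pos_sq (2 - 3 * u) + pos_sq (3 * u - 1) * pos_sq' (2 - 3 * u))
     / (pos_sq (3 * u - 1) + pos_sq (2 - 3 * u))\<^sup>2"

lemma smooth_step_denominator_pos: "0 < pos_sq (3 * u - 1) + pos_sq (2 - 3 * u)"
proof (cases "3 * u - 1 > 0")
  case True
  then show ?thesis
    using pos_sq_pos[OF True] pos_sq_nonneg[of "2 - 3 * u"] by linarith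
next
  case False
  then have "0 < 2 - 3 * u"
    by linarith
  then show ?thesis
    using pos_sq_pos[of "2 - 3 * u"] pos_sq_nonneg[of "3 * u - 1"] by linarith
qed

lemma smooth_step_has_real_derivative: "(smooth_step has_real_derivative smooth_step' u) (at u)"
proof -
  have left: "((\<lambda>u. pos_sq (3 * u - 1)) has_real_derivative pos_sq' (3 * u - 1) * 3) (at u)"
    by (rule DERIV_chain2[OF pos_sq_has_real_derivative]) (auto intro!: derivative_eq_intros)
  have right: "((\<lambda>u. pos_sq (2 - 3 * u)) has_real_derivative pos_sq' (2 - 3 * u) * (-3)) (at u)"
    by (rule DERIV_chain2[OF pos_sq_has_real_derivative]) (auto intro!: derivative_eq_intros)
  show ?thesis
    using DERIV_divide[OF left DERIV_add[OF left right]] smooth_step_denominator_pos[of u]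
    unfolding smooth_step_def[abs_def] smooth_step'_def
    by (simp add: power2_eq_square algebra_simps)
qed

lemma continuous_on_smooth_step': "continuous_on S smooth_step'"
  using smooth_step_denominator_pos[THEN less_imp_neq, THEN not_sym]
  unfolding smooth_step_def smooth_step'_def
  by (auto intro!: continuous_intros continuous_on_compose2[OF continuous_on_pos_sq(1)]
      continuous_on_compose2[OF continuous_on_pos_sq(2)])

lemma smooth_step_eq_0: "u \<le> 1/3 \<Longrightarrow> smooth_step u = 0 \<and> smooth_step' u = 0"
  by (auto simp: smooth_step_def smooth_step'_def pos_sq_eq_0)

lemma smooth_step_eq_1: "2/3 \<le> u \<Longrightarrow> smooth_step u = 1 \<and> smooth_step' u = 0"
  using smooth_step_denominator_pos[of u] by (auto simp: smooth_step_def smooth_step'_def pos_sq_eq_0)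

lemma smooth_step_bounds: "0 \<le> smooth_step u" "smooth_step u \<le> 1"
  using smooth_step_denominator_pos[of u] pos_sq_nonneg
  by (auto simp: smooth_step_def divide_simps)

lemma smooth_step_mono:
  assumes "u \<le> v"
  shows "smooth_step u \<le> smooth_step v"
proof -
  have "pos_sq (3 * u - 1) * pos_sq (2 - 3 * v) \<le> pos_sq (3 * v - 1) * pos_sq (2 - 3 * u)"
    using assms by (intro mult_mono pos_sq_mono pos_sq_nonneg) auto
  then show ?thesis
    using smooth_step_denominator_pos[of u] smooth_step_denominator_pos[of v]
    by (simp add: smooth_step_def divide_simps algebra_simps)
qed

definition bump :: "'a::real_inner \<Rightarrow> real \<Rightarrow> 'a \<Rightarrow> real" where
  "bump y r x = pos_sq (1 - (norm (x - y))\<^sup>2 / r\<^sup>2)"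

definition bump' :: "'a::real_inner \<Rightarrow> real \<Rightarrow> 'a \<Rightarrow> 'a \<Rightarrow> real" where
  "bump' y r x u = pos_sq' (1 - (norm (x - y))\<^sup>2 / r\<^sup>2) * (- 2 * ((x - y) \<bullet> u) / r\<^sup>2)"

lemma bump_has_derivative: "(bump y r has_derivative bump' y r x) (at x within S)"
proof -
  have "((\<lambda>x. 1 - ((x - y) \<bullet> (x - y)) * inverse (r\<^sup>2)) has_derivative
      (\<lambda>u. - (((x - y) \<bullet> u + u \<bullet> (x - y)) * inverse (r\<^sup>2)))) (at x within S)"
    by (auto intro!: derivative_eq_intros)
  from has_derivative_compose[OF this pos_sq_has_real_derivative[unfolded has_field_derivative_def]]
  show ?thesis
    unfolding bump_def[abs_def] bump'_def power2_norm_eq_inner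
    by (simp add: divide_inverse inner_commute algebra_simps)
qed

lemma continuous_on_bump': "continuous_on S (\<lambda>x. bump' y r x u)"
  unfolding bump_def bump'_def divide_inverse
  by (auto intro!: continuous_intros continuous_on_compose2[OF continuous_on_pos_sq(1)]
      continuous_on_compose2[OF continuous_on_pos_sq(2)])

lemma bump_bounds: "0 \<le> bump y r x" "bump y r x \<le> 1"
proof -
  show "0 \<le> bump y r x"
    by (simp add: bump_def pos_sq_nonneg)
  have "max 0 (1 - (norm (x - y))\<^sup>2 / r\<^sup>2) \<le> 1"
    by simp
  then show "bump y r x \<le> 1"
    unfolding bump_def pos_sq_def by (intro power_le_one) auto
qed

lemma bump_eq_0:
  assumes "0 < r" "r \<le> dist x y"
  shows "bump y r x = 0" "bump' y r x u = 0"
proof -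
  have "r\<^sup>2 \<le> (norm (x - y))\<^sup>2"
    using assms by (intro power_mono) (auto simp: dist_norm)
  then have "1 - (norm (x - y))\<^sup>2 / r\<^sup>2 \<le> 0"
    using assms(1) by (simp add: field_simps)
  then show "bump y r x = 0" "bump' y r x u = 0"
    by (simp_all add: bump_def bump'_def pos_sq_eq_0)
qed

lemma bump_pos:
  assumes "0 < r" "dist x y < r"
  shows "0 < bump y r x"
proof -
  have "(norm (x - y))\<^sup>2 < r\<^sup>2"
    using assms by (intro power_strict_mono) (auto simp: dist_norm)
  then show ?thesis
    using assms(1) by (simp add: bump_def pos_sq_pos field_simps)
qed

lemma bump'_bound:
  assumes "0 < r"
  shows "\<bar>bump' y r x u\<bar> \<le> 4 / r * norm u"
proof (cases "dist x y < r")
  case False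
  then show ?thesis
    using bump_eq_0(2)[OF assms, of x y u] assms by simp
next
  case True
  define s where "s = pos_sq' (1 - (norm (x - y))\<^sup>2 / r\<^sup>2)"
  have s: "0 \<le> s" "s \<le> 2"
    by (auto simp: s_def pos_sq'_def)
  have "\<bar>(x - y) \<bullet> u\<bar> \<le> norm (x - y) * norm u"
    by (rule Cauchy_Schwarz_ineq2)
  also have "\<dots> \<le> r * norm u"
    using True by (intro mult_right_mono) (auto simp: dist_norm)
  finally have "\<bar>(x - y) \<bullet> u\<bar> \<le> r * norm u" .
  have "\<bar>bump' y r x u\<bar> = s * (2 * \<bar>(x - y) \<bullet> u\<bar> / r\<^sup>2)"
    using s by (simp add: bump'_def s_def abs_mult)
  also have "\<dots> \<le> 2 * (2 * (r * norm u) / r\<^sup>2)"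
    using s \<open>\<bar>(x - y) \<bullet> u\<bar> \<le> r * norm u\<close> by (intro mult_mono divide_right_mono) auto
  also have "\<dots> = 4 / r * norm u"
    using assms by (simp add: power2_eq_square field_simps)
  finally show ?thesis .
qed

lemma bump_product_bounds:
  fixes v :: "real \<times> 'a::real_inner"
  assumes "0 < r" "\<bar>c\<bar> \<le> M" "\<bar>c'\<bar> \<le> M"
  shows "\<bar>bump y r x * c\<bar> \<le> M"
    and "\<bar>bump y r x * (c' * fst v) + bump' y r x (snd v) * c\<bar> \<le> M * (1 + 4 / r) * norm v"
    and "\<bar>bump' y r x (snd v)\<bar> \<le> 4 / r * norm v"
proof -
  have b_abs: "\<bar>bump y r x * X\<bar> \<le> \<bar>X\<bar>" for X
    using bump_bounds[of y r x] by (simp add: abs_mult mult_left_le_one_le)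
  then show "\<bar>bump y r x * c\<bar> \<le> M"
    using assms(2) by (rule order_trans)
  have "norm (snd v) \<le> norm v"
    using norm_snd_le[of "snd v" "fst v"] by simp
  then show b': "\<bar>bump' y r x (snd v)\<bar> \<le> 4 / r * norm v"
    using bump'_bound[OF assms(1), of y x "snd v"] assms(1)
    by (meson mult_left_mono order.trans less_imp_le zero_le_divide_iff zero_le_numeral)
  have "\<bar>fst v\<bar> \<le> norm v"
    using norm_fst_le[of "fst v" "snd v"] by simp
  then have "\<bar>c' * fst v\<bar> \<le> M * norm v"
    using assms(3) by (simp add: abs_mult mult_mono')
  then have "\<bar>bump y r x * (c' * fst v)\<bar> \<le> M * norm v"
    by (rule order_trans[OF b_abs])
  moreover have "\<bar>bump' y r x (snd v) * c\<bar> \<le> 4 / r * norm v * M"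
    unfolding abs_mult using b' assms by (intro mult_mono) auto
  ultimately have "\<bar>bump y r x * (c' * fst v) + bump' y r x (snd v) * c\<bar> \<le> M * norm v + 4 / r * norm v * M"
    by (meson abs_triangle_ineq add_mono order_trans)
  then show "\<bar>bump y r x * (c' * fst v) + bump' y r x (snd v) * c\<bar> \<le> M * (1 + 4 / r) * norm v"
    by (simp add: algebra_simps)
qed

lemma has_C1_derivative_bump_snd:
  "has_C1_derivative (\<lambda>p. bump y r (snd p)) (\<lambda>p v. bump' y r (snd p) (snd v)) (S :: ('b::real_normed_vector \<times> 'a::real_inner) set)"
proof (rule has_C1_derivativeI)
  show "((\<lambda>p. bump y r (snd p)) has_derivative (\<lambda>v. bump' y r (snd p) (snd v))) (at p within S)" for p
    by (rule has_derivative_compose[OF has_derivative_snd[OF has_derivative_ident] bump_has_derivative])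
  show "continuous_on S (\<lambda>p. bump' y r (snd p) (snd v))" for v
    by (rule continuous_on_compose2[OF continuous_on_bump']) (auto intro!: continuous_intros)
qed

section \<open>Approximation on a time strip\<close>

lemma moving_average_has_real_derivative:
  fixes g :: "real \<Rightarrow> real"
  assumes "continuous_on UNIV g" "0 \<le> \<delta>"
  shows "((\<lambda>t. integral {t..t + \<delta>} g) has_real_derivative g (t + \<delta>) - g t) (at t)"
proof -
  define F where "F u = integral {t - 1..u} g" for u
  have F_deriv: "(F has_real_derivative g u) (at u)" if "t - 1 < u" for u
  proof -
    have "(F has_real_derivative g u) (at u within {t - 1..u + 1})"
      unfolding F_def using that
      by (intro integral_has_real_derivative continuous_on_subset[OF assms(1)]) auto
    moreover have "at u within {t - 1..u + 1} = at u"
      using that by (intro at_within_interior) (simp add: interior_atLeastAtMost_real)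
    ultimately show ?thesis
      by simp
  qed
  have "((\<lambda>u. F (u + \<delta>) - F u) has_real_derivative g (t + \<delta>) * 1 - g t) (at t)"
    using assms(2) by (intro DERIV_diff DERIV_chain2[OF F_deriv] F_deriv) (auto intro!: derivative_eq_intros)
  moreover have "\<forall>\<^sub>F u in nhds t. integral {u..u + \<delta>} g = F (u + \<delta>) - F u"
  proof (rule eventually_nhds_in_open[of "{t - 1<..}", THEN eventually_mono])
    fix u assume "u \<in> {t - 1<..}"
    then have "integral {t - 1..u} g + integral {u..u + \<delta>} g = integral {t - 1..u + \<delta>} g"
      using assms by (intro Henstock_Kurzweil_Integration.integral_combine integrable_continuous_real
          continuous_on_subset[OF assms(1)]) auto
    then show "integral {u..u + \<delta>} g = F (u + \<delta>) - F u"
      by (simp add: F_def)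
  qed auto
  ultimately show ?thesis
    by (subst DERIV_cong_ev[OF refl _ refl]) auto
qed

lemma moving_average_approx:
  fixes f :: "real \<Rightarrow> real"
  assumes "continuous_on {t..t + \<delta>} f" "0 < \<delta>" "\<And>s. s \<in> {t..t + \<delta>} \<Longrightarrow> \<bar>f s - f t\<bar> \<le> e"
  shows "\<bar>integral {t..t + \<delta>} f / \<delta> - f t\<bar> \<le> e"
proof -
  have "integral {t..t + \<delta>} (\<lambda>s. f s - f t) = integral {t..t + \<delta>} f - \<delta> * f t"
    using assms(1,2) by (subst integral_diff) (auto intro: integrable_continuous_real)
  moreover have "norm (integral {t..t + \<delta>} (\<lambda>s. f s - f t)) \<le> e * ((t + \<delta>) - t)"
    using assms by (intro integral_bound) (auto intro!: continuous_intros)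
  ultimately have "\<bar>integral {t..t + \<delta>} f - f t * \<delta>\<bar> \<le> e * \<delta>"
    by (simp add: mult.commute)
  then show ?thesis
    using \<open>0 < \<delta>\<close> by (simp add: divide_diff_eq_iff divide_le_eq)
qed

lemma antimono_moving_average:
  fixes g :: "real \<Rightarrow> real"
  assumes "continuous_on UNIV g" "antimono g" "0 < \<delta>"
  shows "antimono (\<lambda>t. integral {t..t + \<delta>} g / \<delta>)"
proof -
  define c where "c t = integral {t..t + \<delta>} g / \<delta>" for t
  have "c t \<le> c s" if "s \<le> t" for s t
  proof (rule DERIV_nonpos_imp_nonincreasing[OF \<open>s \<le> t\<close>])
    fix u
    have "(c has_real_derivative (g (u + \<delta>) - g u) / \<delta>) (at u)"
      unfolding c_def[abs_def]
      using DERIV_cdivide[OF moving_average_has_real_derivative[OF assms(1) less_imp_le[OF assms(3)]]]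
      by simp
    moreover have "(g (u + \<delta>) - g u) / \<delta> \<le> 0"
      using antimonoD[OF assms(2), of u "u + \<delta>"] assms(3) by (simp add: divide_nonpos_pos)
    ultimately show "\<exists>y. (c has_real_derivative y) (at u) \<and> y \<le> 0"
      by blast
  qed
  then show ?thesis
    unfolding c_def[abs_def] by (intro antimonoI)
qed

lemma nonincreasing_C1_approximation:
  fixes f :: "real \<Rightarrow> real"
  assumes f_cont: "continuous_on {0..} f" and f_mono: "\<And>s t. 0 \<le> s \<Longrightarrow> s \<le> t \<Longrightarrow> f t \<le> f s"
    and "0 < e" "0 \<le> a"
  shows "\<exists>c c'. (\<forall>t. (c has_real_derivative c' t) (at t)) \<and> continuous_on UNIV c'
           \<and> antimono c \<and> (\<forall>t\<in>{a..b}. \<bar>c t - f t\<bar> \<le> e)"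
proof -
  \<comment> \<open>Extending f constantly to negative times makes the moving average differentiable at 0.\<close>
  define g where "g s = f (max 0 s)" for s
  have g_cont: "continuous_on S g" for S
    unfolding g_def by (rule continuous_on_compose2[OF f_cont]) (auto intro!: continuous_intros)
  have "uniformly_continuous_on {a..b + 1} f"
    using \<open>0 \<le> a\<close> by (intro compact_uniformly_continuous continuous_on_subset[OF f_cont]) auto
  then obtain d where "0 < d"
    and d: "\<And>s t. s \<in> {a..b + 1} \<Longrightarrow> t \<in> {a..b + 1} \<Longrightarrow> dist s t < d \<Longrightarrow> dist (f s) (f t) < e"
    unfolding uniformly_continuous_on_def using \<open>0 < e\<close> by metis
  define \<delta> where "\<delta> = min 1 (d / 2)"
  have \<delta>: "0 < \<delta>" "\<delta> \<le> 1" "\<delta> < d"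
    using \<open>0 < d\<close> by (auto simp: \<delta>_def)
  define c where "c t = integral {t..t + \<delta>} g / \<delta>" for t
  define c' where "c' t = (g (t + \<delta>) - g t) / \<delta>" for t
  have c_deriv: "(c has_real_derivative c' t) (at t)" for t
    unfolding c_def[abs_def] c'_def
    using DERIV_cdivide[OF moving_average_has_real_derivative[OF g_cont less_imp_le[OF \<delta>(1)]]] by simp
  have "continuous_on UNIV c'"
    unfolding c'_def using \<delta>
    by (intro continuous_intros continuous_on_compose2[OF g_cont[of UNIV]]) auto
  moreover have "antimono c"
    unfolding c_def[abs_def]
  proof (rule antimono_moving_average[OF g_cont _ \<open>0 < \<delta>\<close>], rule antimonoI)
    show "g t \<le> g s" if "s \<le> t" for s t
      unfolding g_def using that by (intro f_mono) auto
  qed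
  moreover have "\<bar>c t - f t\<bar> \<le> e" if t: "t \<in> {a..b}" for t
  proof -
    have "\<bar>integral {t..t + \<delta>} g / \<delta> - g t\<bar> \<le> e"
    proof (rule moving_average_approx[OF g_cont \<open>0 < \<delta>\<close>])
      fix s assume s: "s \<in> {t..t + \<delta>}"
      then have "dist (f s) (f t) < e"
        using t \<delta> by (intro d) (auto simp: dist_real_def)
      then show "\<bar>g s - g t\<bar> \<le> e"
        using s t \<open>0 \<le> a\<close> by (simp add: g_def dist_real_def)
    qed
    then show ?thesis
      using t \<open>0 \<le> a\<close> by (simp add: c_def g_def)
  qed
  ultimately show ?thesis
    using c_deriv by blast
qed

lemma uniform_spatial_radius:
  fixes \<phi> :: "real \<times> 'a::heine_borel \<Rightarrow> real"
  assumes "open U" "continuous_on ({0..} \<times> U) \<phi>" "0 < e" "0 \<le> a" "y \<in> U"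
  shows "\<exists>\<rho>>0. \<forall>x\<in>ball y \<rho>. \<forall>t\<in>{a..b}. \<bar>\<phi> (t, x) - \<phi> (t, y)\<bar> \<le> e"
proof -
  obtain r where "0 < r" "cball y r \<subseteq> U"
    using open_contains_cball assms(1,5) by blast
  then have "uniformly_continuous_on ({a..b} \<times> cball y r) \<phi>"
    using assms(4) by (intro compact_uniformly_continuous continuous_on_subset[OF assms(2)]
        compact_Times compact_Icc compact_cball) auto
  then obtain d where "0 < d" and d: "\<And>p q. p \<in> {a..b} \<times> cball y r \<Longrightarrow> q \<in> {a..b} \<times> cball y r \<Longrightarrow>
      dist p q < d \<Longrightarrow> dist (\<phi> p) (\<phi> q) < e"
    unfolding uniformly_continuous_on_def using \<open>0 < e\<close> by metis
  have "\<bar>\<phi> (t, x) - \<phi> (t, y)\<bar> \<le> e" if "x \<in> ball y (min r d)" "t \<in> {a..b}" for x t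
    using d[of "(t, x)" "(t, y)"] that \<open>0 < r\<close>
    by (auto simp: dist_Pair_Pair dist_commute dist_real_def)
  then show ?thesis
    using \<open>0 < r\<close> \<open>0 < d\<close> by (intro exI[of _ "min r d"]) auto
qed

lemma ball_cover_sequence:
  fixes U :: "'a::{metric_space, second_countable_topology} set"
  assumes "U \<noteq> {}" "\<And>x. x \<in> U \<Longrightarrow> 0 < \<rho> x"
  shows "\<exists>y :: nat \<Rightarrow> 'a. range y \<subseteq> U \<and> (\<forall>x\<in>U. \<exists>i. dist x (y i) < \<rho> (y i))"
proof -
  obtain \<F> where "\<F> \<subseteq> (\<lambda>y. ball y (\<rho> y)) ` U" "countable \<F>" "\<Union>\<F> = (\<Union>y\<in>U. ball y (\<rho> y))"
    using Lindelof[of "(\<lambda>y. ball y (\<rho> y)) ` U"] by auto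
  moreover obtain Y where Y: "countable Y" "Y \<subseteq> U" "\<F> = (\<lambda>y. ball y (\<rho> y)) ` Y"
    using countable_subset_image[of \<F> "\<lambda>y. ball y (\<rho> y)" U] calculation(1,2) by blast
  ultimately have Y_cover: "(\<Union>y\<in>Y. ball y (\<rho> y)) = (\<Union>y\<in>U. ball y (\<rho> y))"
    by simp
  have U_cover: "U \<subseteq> (\<Union>y\<in>Y. ball y (\<rho> y))"
    unfolding Y_cover using assms(2) by force
  then have "Y \<noteq> {}"
    using assms(1) by auto
  have "\<exists>i. dist x (from_nat_into Y i) < \<rho> (from_nat_into Y i)" if "x \<in> U" for x
    using U_cover that range_from_nat_into[OF \<open>Y \<noteq> {}\<close> \<open>countable Y\<close>]
    by (force simp: dist_commute)
  moreover have "range (from_nat_into Y) \<subseteq> U"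
    using from_nat_into[OF \<open>Y \<noteq> {}\<close>] Y(2) by auto
  ultimately show ?thesis
    by blast
qed

lemma small_oscillation_ball_cover:
  fixes \<phi> :: "real \<times> 'a::euclidean_space \<Rightarrow> real"
  assumes "open U" "U \<noteq> {}" "continuous_on ({0..} \<times> U) \<phi>" "0 < e" "0 \<le> a"
  shows "\<exists>(y :: nat \<Rightarrow> 'a) r. (\<forall>i. y i \<in> U) \<and> (\<forall>i. 0 < r i) \<and> (\<forall>x\<in>U. \<exists>i. dist x (y i) < r i)
           \<and> (\<forall>i x t. dist x (y i) < r i \<longrightarrow> t \<in> {a..b} \<longrightarrow> \<bar>\<phi> (t, x) - \<phi> (t, y i)\<bar> \<le> e)"
proof -
  have "\<forall>z\<in>U. \<exists>\<rho>>0. \<forall>x\<in>ball z \<rho>. \<forall>t\<in>{a..b}. \<bar>\<phi> (t, x) - \<phi> (t, z)\<bar> \<le> e"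
    using uniform_spatial_radius[OF assms(1,3,4,5)] by blast
  then obtain \<rho> where \<rho>_pos: "\<And>z. z \<in> U \<Longrightarrow> 0 < \<rho> z"
    and \<rho>: "\<And>z x t. z \<in> U \<Longrightarrow> x \<in> ball z (\<rho> z) \<Longrightarrow> t \<in> {a..b} \<Longrightarrow> \<bar>\<phi> (t, x) - \<phi> (t, z)\<bar> \<le> e"
    by metis
  obtain y :: "nat \<Rightarrow> 'a" where y: "range y \<subseteq> U" "\<And>x. x \<in> U \<Longrightarrow> \<exists>i. dist x (y i) < \<rho> (y i)"
    using ball_cover_sequence[OF assms(2), of \<rho>] \<rho>_pos by blast
  have "\<bar>\<phi> (t, x) - \<phi> (t, y i)\<bar> \<le> e" if "dist x (y i) < \<rho> (y i)" "t \<in> {a..b}" for i x t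
    using \<rho>[of "y i" x t] y that by (auto simp: dist_commute)
  moreover have "y i \<in> U" for i
    using y(1) by auto
  ultimately show ?thesis
    using y(2) \<rho>_pos by (intro exI[of _ y] exI[of _ "\<lambda>i. \<rho> (y i)"]) auto
qed

lemma compact_continuous_common_bound:
  fixes f g :: "'a::topological_space \<Rightarrow> real"
  assumes "compact S" "continuous_on S f" "continuous_on S g"
  shows "\<exists>B\<ge>0. \<forall>t\<in>S. \<bar>f t\<bar> \<le> B \<and> \<bar>g t\<bar> \<le> B"
proof -
  have "bounded ((\<lambda>t. (f t, g t)) ` S)"
    using assms by (intro compact_imp_bounded compact_continuous_image continuous_intros)
  then obtain B where "\<forall>t\<in>S. norm (f t, g t) \<le> B"
    unfolding bounded_iff by blast
  then show ?thesis
    by (intro exI[of _ "max 0 B"])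
      (metis max.coboundedI2 norm_fst_le norm_snd_le order_trans real_norm_def max.cobounded1)
qed

lemma nonincreasing_C1_approximations:
  fixes f :: "nat \<Rightarrow> real \<Rightarrow> real"
  assumes "\<And>i. continuous_on {0..} (f i)" "\<And>i s t. 0 \<le> s \<Longrightarrow> s \<le> t \<Longrightarrow> f i t \<le> f i s"
    and "0 < e" "0 \<le> a"
  shows "\<exists>c c' M. (\<forall>i t. (c i has_real_derivative c' i t) (at t)) \<and> (\<forall>i. continuous_on UNIV (c' i))
           \<and> (\<forall>i. antimono (c i)) \<and> (\<forall>i. \<forall>t\<in>{a..b}. \<bar>c i t - f i t\<bar> \<le> e)
           \<and> (\<forall>i. 0 \<le> M i \<and> (\<forall>t\<in>{0..T}. \<bar>c i t\<bar> \<le> M i \<and> \<bar>c' i t\<bar> \<le> M i))"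
proof -
  obtain c c' where c_deriv: "\<And>i t. (c i has_real_derivative c' i t) (at t)"
    and c'_cont: "\<And>i. continuous_on UNIV (c' i)" and "\<And>i. antimono (c i)"
    and "\<And>i t. t \<in> {a..b} \<Longrightarrow> \<bar>c i t - f i t\<bar> \<le> e"
    using nonincreasing_C1_approximation[OF assms] by metis
  moreover have "\<exists>B\<ge>0. \<forall>t\<in>{0..T}. \<bar>c i t\<bar> \<le> B \<and> \<bar>c' i t\<bar> \<le> B" for i
    by (intro compact_continuous_common_bound compact_Icc continuous_on_subset[OF c'_cont] subset_UNIV
        continuous_at_imp_continuous_on ballI DERIV_isCont[OF c_deriv])
  then obtain M where "\<And>i. 0 \<le> M i \<and> (\<forall>t\<in>{0..T}. \<bar>c i t\<bar> \<le> M i \<and> \<bar>c' i t\<bar> \<le> M i)"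
    by metis
  ultimately show ?thesis
    by (intro exI[of _ c] exI[of _ c'] exI[of _ M]) auto
qed

lemma suminf_weighted_mean_bound:
  fixes \<beta> c :: "nat \<Rightarrow> real"
  assumes "\<And>i. 0 \<le> \<beta> i" "summable \<beta>" "summable (\<lambda>i. \<beta> i * c i)" "0 < (\<Sum>i. \<beta> i)"
    and close: "\<And>i. \<beta> i \<noteq> 0 \<Longrightarrow> \<bar>c i - z\<bar> \<le> e"
  shows "\<bar>(\<Sum>i. \<beta> i * c i) / (\<Sum>i. \<beta> i) - z\<bar> \<le> e"
proof -
  have term_bound: "\<bar>\<beta> i * (c i - z)\<bar> \<le> e * \<beta> i" for i
    using close[of i] assms(1)[of i] by (cases "\<beta> i = 0") (auto simp: abs_mult mult.commute)
  have summable_e: "summable (\<lambda>i. e * \<beta> i)"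
    using assms(2) by (rule summable_mult)
  have summable_terms: "summable (\<lambda>i. norm (\<beta> i * (c i - z)))"
    by (rule summable_comparison_test[OF _ summable_e]) (use term_bound in auto)
  have "(\<Sum>i. \<beta> i * c i) - z * (\<Sum>i. \<beta> i) = (\<Sum>i. \<beta> i * c i) - (\<Sum>i. z * \<beta> i)"
    using assms(2) by (simp add: suminf_mult)
  also have "\<dots> = (\<Sum>i. \<beta> i * (c i - z))"
    using suminf_diff[OF assms(3) summable_mult[OF assms(2), of z]] by (simp add: algebra_simps)
  also have "\<bar>\<dots>\<bar> \<le> (\<Sum>i. norm (\<beta> i * (c i - z)))"
    using summable_norm[OF summable_terms] by simp
  also have "\<dots> \<le> (\<Sum>i. e * \<beta> i)"
    by (rule suminf_le[OF _ summable_terms summable_e]) (use term_bound in auto)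
  also have "\<dots> = e * (\<Sum>i. \<beta> i)"
    using assms(2) by (rule suminf_mult)
  finally show ?thesis
    using \<open>0 < (\<Sum>i. \<beta> i)\<close> by (simp add: divide_diff_eq_iff divide_le_eq)
qed

(* (1 + M i) * (1 + 4 / r i) bounds the i-th terms of numer and denom below together with
   their derivatives (bump_product_bounds), so weight_bound makes (1/2)^i a majorant for the
   M-test in C^1. *)
locale bump_average =
  fixes w :: "nat \<Rightarrow> real" and y :: "nat \<Rightarrow> 'a::euclidean_space" and r :: "nat \<Rightarrow> real"
    and c c' :: "nat \<Rightarrow> real \<Rightarrow> real" and M :: "nat \<Rightarrow> real" and T :: real
  assumes r_pos: "0 < r i" and w_pos: "0 < w i" and M_nonneg: "0 \<le> M i"
    and weight_bound: "w i * ((1 + M i) * (1 + 4 / r i)) \<le> (1/2)^i"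
    and c_deriv: "t \<in> {0..T} \<Longrightarrow> (c i has_real_derivative c' i t) (at t)"
    and c'_cont: "continuous_on {0..T} (c' i)"
    and c_bound: "t \<in> {0..T} \<Longrightarrow> \<bar>c i t\<bar> \<le> M i"
    and c'_bound: "t \<in> {0..T} \<Longrightarrow> \<bar>c' i t\<bar> \<le> M i"
begin

definition numer :: "real \<times> 'a \<Rightarrow> real" where
  "numer p = (\<Sum>i. w i * (bump (y i) (r i) (snd p) * c i (fst p)))"

definition denom :: "real \<times> 'a \<Rightarrow> real" where
  "denom p = (\<Sum>i. w i * bump (y i) (r i) (snd p))"

lemma weighted_bound:
  assumes "\<bar>Y\<bar> \<le> X * Z" "X \<le> (1 + M i) * (1 + 4 / r i)" "0 \<le> Z"
  shows "\<bar>w i * Y\<bar> \<le> (1/2)^i * Z"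
proof -
  have "\<bar>w i * Y\<bar> \<le> w i * (X * Z)"
    using w_pos[of i] assms(1) by (simp add: abs_mult)
  also have "\<dots> \<le> w i * ((1 + M i) * (1 + 4 / r i) * Z)"
    using w_pos[of i] assms(2,3) by (intro mult_left_mono mult_right_mono) auto
  also have "\<dots> \<le> (1/2)^i * Z"
    using mult_right_mono[OF weight_bound assms(3)] by (simp add: mult.assoc)
  finally show ?thesis .
qed

lemma bump_term_bounds:
  assumes "t \<in> {0..T}"
  shows "\<bar>w i * (bump (y i) (r i) x * c i t)\<bar> \<le> (1/2)^i"
    and "\<bar>w i * (bump (y i) (r i) x * (c' i t * fst v) + bump' (y i) (r i) x (snd v) * c i t)\<bar>
           \<le> (1/2)^i * norm v"
    and "\<bar>w i * bump (y i) (r i) x\<bar> \<le> (1/2)^i"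
    and "\<bar>w i * bump' (y i) (r i) x (snd v)\<bar> \<le> (1/2)^i * norm v"
proof -
  let ?q = "4 / r i"
  have "0 \<le> M i * ?q"
    using M_nonneg[of i] r_pos[of i] by simp
  moreover have "(1 + M i) * (1 + ?q) = 1 + ?q + M i + M i * ?q"
    by (simp add: distrib_left distrib_right add_divide_distrib)
  ultimately have factor: "1 \<le> (1 + M i) * (1 + ?q)" "?q \<le> (1 + M i) * (1 + ?q)"
      "M i \<le> (1 + M i) * (1 + ?q)" "M i * (1 + ?q) \<le> (1 + M i) * (1 + ?q)"
    using M_nonneg[of i] r_pos[of i] by (simp_all add: algebra_simps)
  note product = bump_product_bounds[OF r_pos[of i] c_bound[OF assms, of i] c'_bound[OF assms, of i],
      of "y i" x]
  show "\<bar>w i * (bump (y i) (r i) x * c i t)\<bar> \<le> (1/2)^i"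
    using weighted_bound[OF _ factor(3), of "bump (y i) (r i) x * c i t" 1] product(1) by simp
  show "\<bar>w i * (bump (y i) (r i) x * (c' i t * fst v) + bump' (y i) (r i) x (snd v) * c i t)\<bar>
      \<le> (1/2)^i * norm v"
    using weighted_bound[OF product(2) factor(4)] by simp
  show "\<bar>w i * bump (y i) (r i) x\<bar> \<le> (1/2)^i"
    using weighted_bound[OF _ factor(1), of "bump (y i) (r i) x" 1] bump_bounds[of "y i" "r i" x] by simp
  show "\<bar>w i * bump' (y i) (r i) x (snd v)\<bar> \<le> (1/2)^i * norm v"
    using weighted_bound[OF product(3) factor(2)] by simp
qed

lemma summable_half_power: "summable (\<lambda>i. (1/2::real)^i)"
  by (rule summable_geometric) simp

lemma convex_strip: "convex ({0..T} \<times> (UNIV :: 'a set))"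
  by (simp add: convex_Times convex_real_interval)

lemma
  shows numer_C1: "\<exists>N'. has_C1_derivative numer N' ({0..T} \<times> UNIV)"
    and summable_numer: "t \<in> {0..T} \<Longrightarrow> summable (\<lambda>i. w i * (bump (y i) (r i) x * c i t))"
proof -
  define f where "f i p = w i * (bump (y i) (r i) (snd p) * c i (fst p))" for i p
  define f' where "f' i p v = w i * (bump (y i) (r i) (snd p) * (c' i (fst p) * fst v)
    + bump' (y i) (r i) (snd p) (snd v) * c i (fst p))" for i p v
  have C1: "has_C1_derivative (f i) (f' i) ({0..T} \<times> UNIV)" for i
    unfolding f_def[abs_def] f'_def[abs_def]
    by (intro has_C1_derivative_const_mult has_C1_derivative_mult has_C1_derivative_bump_snd
        has_C1_derivative_fst c_deriv c'_cont)
  have "\<bar>f i p\<bar> \<le> (1/2)^i" "\<bar>f' i p v\<bar> \<le> (1/2)^i * norm v" if "p \<in> {0..T} \<times> UNIV" for i p v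
    using that bump_term_bounds(1)[of "fst p" i "snd p"] bump_term_bounds(2)[of "fst p" i "snd p" v]
    by (auto simp: f_def f'_def)
  note series = has_C1_derivative_suminf[OF convex_strip C1 this summable_half_power]
    has_C1_derivative_suminf_summable[OF convex_strip C1 this summable_half_power]
  show "\<exists>N'. has_C1_derivative numer N' ({0..T} \<times> UNIV)"
    using series(1) by (auto simp: numer_def[abs_def] f_def)
  show "t \<in> {0..T} \<Longrightarrow> summable (\<lambda>i. w i * (bump (y i) (r i) x * c i t))"
    using series(2)[of "(t, x)"] by (simp add: f_def)
qed

lemma
  shows denom_C1: "\<exists>D'. has_C1_derivative denom D' ({0..T} \<times> UNIV)"
    and summable_denom: "t \<in> {0..T} \<Longrightarrow> summable (\<lambda>i. w i * bump (y i) (r i) x)"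
proof -
  define f where "f i p = w i * bump (y i) (r i) (snd p)" for i and p :: "real \<times> 'a"
  define f' where "f' i p v = w i * bump' (y i) (r i) (snd p) (snd v)" for i and p v :: "real \<times> 'a"
  have C1: "has_C1_derivative (f i) (f' i) ({0..T} \<times> UNIV)" for i
    unfolding f_def[abs_def] f'_def[abs_def]
    by (intro has_C1_derivative_const_mult has_C1_derivative_bump_snd)
  have "\<bar>f i p\<bar> \<le> (1/2)^i" "\<bar>f' i p v\<bar> \<le> (1/2)^i * norm v" if "p \<in> {0..T} \<times> UNIV" for i p v
    using that bump_term_bounds(3)[of "fst p" i "snd p"] bump_term_bounds(4)[of "fst p" i "snd p" v]
    by (auto simp: f_def f'_def)
  note series = has_C1_derivative_suminf[OF convex_strip C1 this summable_half_power]
    has_C1_derivative_suminf_summable[OF convex_strip C1 this summable_half_power]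
  show "\<exists>D'. has_C1_derivative denom D' ({0..T} \<times> UNIV)"
    using series(1) by (auto simp: denom_def[abs_def] f_def)
  show "t \<in> {0..T} \<Longrightarrow> summable (\<lambda>i. w i * bump (y i) (r i) x)"
    using series(2)[of "(t, x)"] by (simp add: f_def)
qed

lemma weighted_bump_nonneg: "0 \<le> w i * bump (y i) (r i) x"
  by (intro mult_nonneg_nonneg less_imp_le[OF w_pos] bump_bounds(1))

lemma denom_pos:
  assumes "t \<in> {0..T}" "dist x (y j) < r j"
  shows "0 < denom (t, x)"
  unfolding denom_def snd_conv
proof (rule suminf_pos2[OF summable_denom[OF assms(1)]])
  show "0 < w j * bump (y j) (r j) x"
    using w_pos[of j] bump_pos[OF r_pos assms(2)] by simp
qed (rule weighted_bump_nonneg)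

lemma bump_average_C1:
  assumes cover: "\<And>x. x \<in> U \<Longrightarrow> \<exists>j. dist x (y j) < r j"
  shows "\<exists>\<Phi>'. has_C1_derivative (\<lambda>p. numer p / denom p) \<Phi>' ({0..T} \<times> U)"
proof -
  obtain N' D' where "has_C1_derivative numer N' ({0..T} \<times> UNIV)" "has_C1_derivative denom D' ({0..T} \<times> UNIV)"
    using numer_C1 denom_C1 by blast
  then have "has_C1_derivative numer N' ({0..T} \<times> U)" "has_C1_derivative denom D' ({0..T} \<times> U)"
    by (auto elim!: has_C1_derivative_subset)
  moreover have "denom p \<noteq> 0" if p: "p \<in> {0..T} \<times> U" for p
  proof -
    have "snd p \<in> U"
      using p by (simp add: mem_Times_iff)
    then obtain j where "dist (snd p) (y j) < r j"
      using cover by blast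
    then have "0 < denom (fst p, snd p)"
      using p by (intro denom_pos) auto
    then show ?thesis
      by simp
  qed
  ultimately show ?thesis
    by (blast intro: has_C1_derivative_divide)
qed

lemma bump_average_antimono:
  assumes c_antimono: "\<And>i. antimono (c i)"
    and "dist x (y j) < r j" "0 \<le> s" "s \<le> t" "t \<le> T"
  shows "numer (t, x) / denom (t, x) \<le> numer (s, x) / denom (s, x)"
proof -
  have "numer (t, x) \<le> numer (s, x)"
    unfolding numer_def fst_conv snd_conv
  proof (rule suminf_le)
    show "w i * (bump (y i) (r i) x * c i t) \<le> w i * (bump (y i) (r i) x * c i s)" for i
      using w_pos[of i] bump_bounds(1) antimonoD[OF c_antimono \<open>s \<le> t\<close>]
      by (intro mult_left_mono) auto
  qed (use assms in \<open>auto intro: summable_numer\<close>)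
  moreover have "denom (t, x) = denom (s, x)"
    by (simp add: denom_def)
  moreover have "0 < denom (s, x)"
    using assms by (intro denom_pos) auto
  ultimately show ?thesis
    by (simp add: divide_right_mono)
qed

lemma bump_average_approx:
  assumes "t \<in> {0..T}" "dist x (y j) < r j"
    and close: "\<And>i. dist x (y i) < r i \<Longrightarrow> \<bar>c i t - z\<bar> \<le> e"
  shows "\<bar>numer (t, x) / denom (t, x) - z\<bar> \<le> e"
proof -
  have "\<bar>(\<Sum>i. w i * bump (y i) (r i) x * c i t) / (\<Sum>i. w i * bump (y i) (r i) x) - z\<bar> \<le> e"
  proof (rule suminf_weighted_mean_bound)
    show "summable (\<lambda>i. w i * bump (y i) (r i) x * c i t)"
      using summable_numer[OF assms(1)] by (simp add: mult.assoc)
    show "0 < (\<Sum>i. w i * bump (y i) (r i) x)"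
      using denom_pos[OF assms(1,2)] by (simp add: denom_def)
    show "\<bar>c i t - z\<bar> \<le> e" if "w i * bump (y i) (r i) x \<noteq> 0" for i
    proof (rule close)
      show "dist x (y i) < r i"
        using that bump_eq_0(1)[OF r_pos[of i], where x=x and y="y i"]
        by (metis linorder_not_less mult_zero_right)
    qed
  qed (use weighted_bump_nonneg summable_denom[OF assms(1)] in auto)
  then show ?thesis
    by (simp add: numer_def denom_def mult.assoc)
qed

end

lemma C1_nonincreasing_approx_on_strip:
  fixes \<phi> :: "real \<times> 'a::euclidean_space \<Rightarrow> real"
  assumes "open U" and \<phi>_cont: "continuous_on ({0..} \<times> U) \<phi>"
    and \<phi>_mono: "\<And>x s t. x \<in> U \<Longrightarrow> 0 \<le> s \<Longrightarrow> s \<le> t \<Longrightarrow> \<phi> (t, x) \<le> \<phi> (s, x)"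
    and "0 < e" "0 \<le> a" "b \<le> T"
  shows "\<exists>\<Phi> \<Phi>'. has_C1_derivative \<Phi> \<Phi>' ({0..T} \<times> U)
           \<and> (\<forall>x\<in>U. \<forall>s t. 0 \<le> s \<longrightarrow> s \<le> t \<longrightarrow> t \<le> T \<longrightarrow> \<Phi> (t, x) \<le> \<Phi> (s, x))
           \<and> (\<forall>x\<in>U. \<forall>t\<in>{a..b}. \<bar>\<Phi> (t, x) - \<phi> (t, x)\<bar> \<le> e)"
proof (cases "U = {}")
  case True
  then show ?thesis
    by (auto simp: has_C1_derivative_def)
next
  case False
  obtain y :: "nat \<Rightarrow> 'a" and r :: "nat \<Rightarrow> real" where y: "\<forall>i. y i \<in> U" and r_pos: "\<forall>i. 0 < r i"
    and cover: "\<forall>x\<in>U. \<exists>i. dist x (y i) < r i"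
    and osc: "\<forall>i x t. dist x (y i) < r i \<longrightarrow> t \<in> {a..b} \<longrightarrow> \<bar>\<phi> (t, x) - \<phi> (t, y i)\<bar> \<le> e / 2"
    using small_oscillation_ball_cover[OF \<open>open U\<close> False \<phi>_cont half_gt_zero[OF \<open>0 < e\<close>] \<open>0 \<le> a\<close>]
    by blast
  have cont: "continuous_on {0..} (\<lambda>t. \<phi> (t, y i))" for i
    using y by (intro continuous_on_compose2[OF \<phi>_cont]) (auto intro!: continuous_intros)
  have mono: "\<phi> (t, y i) \<le> \<phi> (s, y i)" if "0 \<le> s" "s \<le> t" for i s t
    using \<phi>_mono y that by blast
  obtain c c' M where c_deriv: "\<forall>i t. (c i has_real_derivative c' i t) (at t)"
    and c'_cont: "\<forall>i. continuous_on UNIV (c' i)" and c_mono: "\<forall>i. antimono (c i)"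
    and c_approx: "\<forall>i. \<forall>t\<in>{a..b}. \<bar>c i t - \<phi> (t, y i)\<bar> \<le> e / 2"
    and M: "\<forall>i. 0 \<le> M i \<and> (\<forall>t\<in>{0..T}. \<bar>c i t\<bar> \<le> M i \<and> \<bar>c' i t\<bar> \<le> M i)"
    using nonincreasing_C1_approximations[of "\<lambda>i t. \<phi> (t, y i)" "e / 2" a b T, OF cont mono
        half_gt_zero[OF \<open>0 < e\<close>] \<open>0 \<le> a\<close>]
    by blast
  define w where "w i = (1/2)^i / ((1 + M i) * (1 + 4 / r i))" for i
  have "0 < (1 + M i) * (1 + 4 / r i)" for i
    using M r_pos by (intro mult_pos_pos add_pos_nonneg) (auto simp: less_imp_le)
  then interpret bump_average w y r c c' M T
    using r_pos M c_deriv continuous_on_subset[OF c'_cont[rule_format] subset_UNIV]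
    by unfold_locales (auto simp: w_def)
  obtain \<Phi>' where "has_C1_derivative (\<lambda>p. numer p / denom p) \<Phi>' ({0..T} \<times> U)"
    using bump_average_C1[OF cover[rule_format]] by blast
  moreover have "numer (t, x) / denom (t, x) \<le> numer (s, x) / denom (s, x)"
    if "x \<in> U" "0 \<le> s" "s \<le> t" "t \<le> T" for x s t
    using cover that c_mono by (blast intro: bump_average_antimono)
  moreover have "\<bar>numer (t, x) / denom (t, x) - \<phi> (t, x)\<bar> \<le> e" if "x \<in> U" "t \<in> {a..b}" for x t
  proof -
    have "\<bar>c i t - \<phi> (t, x)\<bar> \<le> e" if "dist x (y i) < r i" for i
    proof -
      have "\<bar>\<phi> (t, x) - \<phi> (t, y i)\<bar> \<le> e / 2"
        using osc that \<open>t \<in> {a..b}\<close> by blast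
      moreover have "\<bar>c i t - \<phi> (t, y i)\<bar> \<le> e / 2"
        using c_approx \<open>t \<in> {a..b}\<close> by blast
      ultimately show ?thesis
        by linarith
    qed
    moreover obtain j where "dist x (y j) < r j"
      using cover \<open>x \<in> U\<close> by blast
    moreover have "t \<in> {0..T}"
      using \<open>t \<in> {a..b}\<close> \<open>0 \<le> a\<close> \<open>b \<le> T\<close> by auto
    ultimately show ?thesis
      by (intro bump_average_approx)
  qed
  ultimately show ?thesis
    by (intro exI[of _ "\<lambda>p. numer p / denom p"] exI[of _ \<Phi>']) auto
qed

section \<open>Gluing in time\<close>

(* blend \<Phi> n passes from \<Phi> (n - 1) to \<Phi> n while t runs through [n + 1/3, n + 2/3];
   for n = 0 the truncated difference n - 1 is 0, so blend \<Phi> 0 = \<Phi> 0. *)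
definition blend :: "(nat \<Rightarrow> real \<times> 'a \<Rightarrow> real) \<Rightarrow> nat \<Rightarrow> real \<times> 'a \<Rightarrow> real" where
  "blend \<Phi> n p = \<Phi> (n - 1) p + smooth_step (fst p - n) * (\<Phi> n p - \<Phi> (n - 1) p)"

definition blend' :: "(nat \<Rightarrow> real \<times> 'a \<Rightarrow> real) \<Rightarrow> (nat \<Rightarrow> real \<times> 'a \<Rightarrow> real \<times> 'a \<Rightarrow> real) \<Rightarrow>
    nat \<Rightarrow> real \<times> 'a \<Rightarrow> real \<times> 'a \<Rightarrow> real" where
  "blend' \<Phi> \<Phi>' n p v = \<Phi>' (n - 1) p v + (smooth_step (fst p - n) * (\<Phi>' n p v - \<Phi>' (n - 1) p v)
     + smooth_step' (fst p - n) * fst v * (\<Phi> n p - \<Phi> (n - 1) p))"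

definition time_glue :: "(nat \<Rightarrow> real \<times> 'a \<Rightarrow> real) \<Rightarrow> real \<times> 'a \<Rightarrow> real" where
  "time_glue \<Phi> p = blend \<Phi> (nat \<lfloor>fst p\<rfloor>) p"

definition time_glue' :: "(nat \<Rightarrow> real \<times> 'a \<Rightarrow> real) \<Rightarrow> (nat \<Rightarrow> real \<times> 'a \<Rightarrow> real \<times> 'a \<Rightarrow> real) \<Rightarrow>
    real \<times> 'a \<Rightarrow> real \<times> 'a \<Rightarrow> real" where
  "time_glue' \<Phi> \<Phi>' p = blend' \<Phi> \<Phi>' (nat \<lfloor>fst p\<rfloor>) p"

lemma has_C1_derivative_blend:
  fixes \<Phi> :: "nat \<Rightarrow> real \<times> 'a::real_normed_vector \<Rightarrow> real"
  assumes "has_C1_derivative (\<Phi> (n - 1)) (\<Phi>' (n - 1)) S" "has_C1_derivative (\<Phi> n) (\<Phi>' n) S"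
  shows "has_C1_derivative (blend \<Phi> n) (blend' \<Phi> \<Phi>' n) S"
proof -
  have "((\<lambda>t. smooth_step (t - n)) has_real_derivative smooth_step' (t - n)) (at t)" for t :: real
    using DERIV_chain2[OF smooth_step_has_real_derivative DERIV_diff[OF DERIV_ident DERIV_const]] by simp
  then have "has_C1_derivative (\<lambda>p. smooth_step (fst p - n)) (\<lambda>p v. smooth_step' (fst p - n) * fst v) (UNIV \<times> UNIV)"
    by (intro has_C1_derivative_fst continuous_on_compose2[OF continuous_on_smooth_step'] continuous_intros) auto
  then have "has_C1_derivative (\<lambda>p. smooth_step (fst p - n)) (\<lambda>p v. smooth_step' (fst p - n) * fst v) S"
    by (rule has_C1_derivative_subset) simp
  then show ?thesis
    unfolding blend_def[abs_def] blend'_def[abs_def]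
    using assms by (intro has_C1_derivative_add has_C1_derivative_mult has_C1_derivative_diff)
qed

lemma blend_eq_left:
  assumes "fst p \<le> real n + 1/3"
  shows "blend \<Phi> n p = \<Phi> (n - 1) p" "blend' \<Phi> \<Phi>' n p = \<Phi>' (n - 1) p"
  using assms smooth_step_eq_0[of "fst p - n"] by (auto simp: blend_def blend'_def fun_eq_iff)

lemma blend_eq_right:
  assumes "real n + 2/3 \<le> fst p"
  shows "blend \<Phi> n p = \<Phi> n p" "blend' \<Phi> \<Phi>' n p = \<Phi>' n p"
  using assms smooth_step_eq_1[of "fst p - n"] by (auto simp: blend_def blend'_def fun_eq_iff)

lemma time_glue_eq_blend:
  assumes "0 \<le> fst p" "real n - 1/3 < fst p" "fst p < real n + 4/3"
  shows "time_glue \<Phi> p = blend \<Phi> n p" "time_glue' \<Phi> \<Phi>' p = blend' \<Phi> \<Phi>' n p"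
proof -
  consider "nat \<lfloor>fst p\<rfloor> = n" | "nat \<lfloor>fst p\<rfloor> = n - 1" "fst p < n" "1 \<le> n" | "nat \<lfloor>fst p\<rfloor> = n + 1" "n + 1 \<le> fst p"
    using assms by (cases "fst p < n"; cases "fst p < n + 1") (auto simp: nat_eq_iff floor_eq_iff)
  then have "time_glue \<Phi> p = blend \<Phi> n p \<and> time_glue' \<Phi> \<Phi>' p = blend' \<Phi> \<Phi>' n p"
  proof cases
    case 2
    then show ?thesis
      using assms blend_eq_left[of p n] blend_eq_right[of "n - 1" p]
      by (simp add: time_glue_def time_glue'_def of_nat_diff)
  next
    case 3
    then show ?thesis
      using assms blend_eq_left[of p "n + 1"] blend_eq_right[of n p]
      by (simp add: time_glue_def time_glue'_def)
  qed (simp add: time_glue_def time_glue'_def)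
  then show "time_glue \<Phi> p = blend \<Phi> n p" "time_glue' \<Phi> \<Phi>' p = blend' \<Phi> \<Phi>' n p"
    by simp_all
qed

lemma nat_floor_bounds:
  assumes "0 \<le> t"
  shows "real (nat \<lfloor>t\<rfloor>) \<le> t" "t < real (nat \<lfloor>t\<rfloor>) + 1"
  using assms by linarith+

lemma has_C1_derivative_time_glue:
  fixes \<Phi> :: "nat \<Rightarrow> real \<times> 'a::real_normed_vector \<Rightarrow> real"
  assumes C1: "\<And>n. has_C1_derivative (\<Phi> n) (\<Phi>' n) ({0..real n + 3} \<times> U)"
  shows "has_C1_derivative (time_glue \<Phi>) (time_glue' \<Phi> \<Phi>') ({0..} \<times> U)"
proof (rule has_C1_derivative_local)
  fix p :: "real \<times> 'a" assume p: "p \<in> {0..} \<times> U"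
  define n where "n = nat \<lfloor>fst p\<rfloor>"
  define V where "V = {real n - 1/3<..<real n + 4/3} \<times> (UNIV :: 'a set)"
  have "real n \<le> fst p" "fst p < real n + 1"
    using p nat_floor_bounds[of "fst p"] by (auto simp: n_def mem_Times_iff)
  then have "open V" "p \<in> V"
    by (auto simp: V_def open_Times mem_Times_iff)
  have "{0..real n + 2} \<subseteq> {0..real (n - 1) + 3}" "{0..real n + 2} \<subseteq> {0..real n + 3}"
    by auto
  then have "has_C1_derivative (blend \<Phi> n) (blend' \<Phi> \<Phi>' n) ({0..real n + 2} \<times> U)"
    using C1[of "n - 1"] C1[of n]
    by (intro has_C1_derivative_blend) (auto elim!: has_C1_derivative_subset)
  then have "has_C1_derivative (blend \<Phi> n) (blend' \<Phi> \<Phi>' n) ({0..} \<times> U \<inter> V)"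
    by (rule has_C1_derivative_subset) (auto simp: V_def)
  then have "has_C1_derivative (time_glue \<Phi>) (time_glue' \<Phi> \<Phi>') ({0..} \<times> U \<inter> V)"
    by (rule has_C1_derivative_cong) (auto simp: V_def intro: time_glue_eq_blend)
  with \<open>open V\<close> \<open>p \<in> V\<close> show "\<exists>V. open V \<and> p \<in> V \<and>
      has_C1_derivative (time_glue \<Phi>) (time_glue' \<Phi> \<Phi>') ({0..} \<times> U \<inter> V)"
    by blast
qed

lemma blend_antimono:
  assumes "\<Phi> (n - 1) (t, x) \<le> \<Phi> (n - 1) (s, x)" "\<Phi> n (t, x) \<le> \<Phi> n (s, x)"
    and "\<Phi> n (s, x) \<le> \<Phi> (n - 1) (s, x)" and "s \<le> t"
  shows "blend \<Phi> n (t, x) \<le> blend \<Phi> n (s, x)"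
proof -
  define \<sigma>s where "\<sigma>s = smooth_step (s - n)"
  define \<sigma>t where "\<sigma>t = smooth_step (t - n)"
  have \<sigma>: "0 \<le> \<sigma>s" "\<sigma>s \<le> \<sigma>t" "\<sigma>t \<le> 1"
    using smooth_step_bounds smooth_step_mono[of "s - n" "t - n"] \<open>s \<le> t\<close>
    by (auto simp: \<sigma>s_def \<sigma>t_def)
  have "blend \<Phi> n (t, x) = (1 - \<sigma>t) * \<Phi> (n - 1) (t, x) + \<sigma>t * \<Phi> n (t, x)"
    by (simp add: blend_def \<sigma>t_def algebra_simps)
  also have "\<dots> \<le> (1 - \<sigma>t) * \<Phi> (n - 1) (s, x) + \<sigma>t * \<Phi> n (s, x)"
    using \<sigma> assms by (intro add_mono mult_left_mono) auto
  also have "\<dots> = \<Phi> (n - 1) (s, x) - \<sigma>t * (\<Phi> (n - 1) (s, x) - \<Phi> n (s, x))"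
    by (simp add: algebra_simps)
  also have "\<dots> \<le> \<Phi> (n - 1) (s, x) - \<sigma>s * (\<Phi> (n - 1) (s, x) - \<Phi> n (s, x))"
    using \<sigma> assms(3) by (intro diff_left_mono mult_right_mono) auto
  also have "\<dots> = blend \<Phi> n (s, x)"
    by (simp add: blend_def \<sigma>s_def algebra_simps)
  finally show ?thesis .
qed

lemma antimono_on_nonneg_from_unit_intervals:
  fixes f :: "real \<Rightarrow> real"
  assumes unit: "\<And>n s t. real n \<le> s \<Longrightarrow> s \<le> t \<Longrightarrow> t \<le> real n + 1 \<Longrightarrow> f t \<le> f s"
    and "0 \<le> s" "s \<le> t"
  shows "f t \<le> f s"
proof -
  have "\<forall>s t. 0 \<le> s \<longrightarrow> s \<le> t \<longrightarrow> t \<le> real m \<longrightarrow> f t \<le> f s" for m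
  proof (induction m)
    case (Suc m)
    show ?case
    proof (intro allI impI)
      fix s t :: real assume st: "0 \<le> s" "s \<le> t" "t \<le> real (Suc m)"
      consider "t \<le> real m" | "real m \<le> s" | "s < real m" "real m < t"
        by linarith
      then show "f t \<le> f s"
      proof cases
        case 3
        then have "f t \<le> f (real m)"
          using st by (intro unit[of m]) auto
        also have "\<dots> \<le> f s"
          using Suc.IH st 3 by auto
        finally show ?thesis .
      qed (use Suc.IH st unit[of m s t] in auto)
    qed
  qed (auto simp: antisym_conv)
  moreover have "t \<le> real (nat \<lceil>t\<rceil>)"
    by linarith
  ultimately show ?thesis
    using assms(2,3) by blast
qed

lemma time_glue_antimono:
  assumes \<Phi>_mono: "\<And>n x s t. x \<in> U \<Longrightarrow> 0 \<le> s \<Longrightarrow> s \<le> t \<Longrightarrow> t \<le> real n + 3 \<Longrightarrow> \<Phi> n (t, x) \<le> \<Phi> n (s, x)"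
    and overlap: "\<And>n x t. x \<in> U \<Longrightarrow> t \<in> {real n + 1..real n + 2} \<Longrightarrow> \<Phi> (Suc n) (t, x) \<le> \<Phi> n (t, x)"
    and "x \<in> U" "0 \<le> s" "s \<le> t"
  shows "time_glue \<Phi> (t, x) \<le> time_glue \<Phi> (s, x)"
proof (rule antimono_on_nonneg_from_unit_intervals[where f="\<lambda>t. time_glue \<Phi> (t, x)"])
  fix n :: nat and s t :: real assume st: "real n \<le> s" "s \<le> t" "t \<le> real n + 1"
  have "\<Phi> n (s, x) \<le> \<Phi> (n - 1) (s, x)"
    using overlap[where n="n - 1" and t=s] \<open>x \<in> U\<close> st by (cases n) auto
  then have "blend \<Phi> n (t, x) \<le> blend \<Phi> n (s, x)"
    using st \<open>x \<in> U\<close> by (intro blend_antimono \<Phi>_mono) (auto simp: of_nat_diff)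
  then show "time_glue \<Phi> (t, x) \<le> time_glue \<Phi> (s, x)"
    using st time_glue_eq_blend(1)[of "(t, x)" n] time_glue_eq_blend(1)[of "(s, x)" n] by simp
qed (use assms in auto)

lemma convex_combination_close:
  fixes a b z :: real
  assumes "0 \<le> \<sigma>" "\<sigma> \<le> 1" "\<bar>a - z\<bar> \<le> e" "\<bar>b - z\<bar> \<le> e"
  shows "\<bar>a + \<sigma> * (b - a) - z\<bar> \<le> e"
proof -
  have "a + \<sigma> * (b - a) - z = (1 - \<sigma>) * (a - z) + \<sigma> * (b - z)"
    by (simp add: algebra_simps)
  also have "\<bar>\<dots>\<bar> \<le> (1 - \<sigma>) * \<bar>a - z\<bar> + \<sigma> * \<bar>b - z\<bar>"
    using assms(1,2) by (metis abs_mult abs_of_nonneg abs_triangle_ineq diff_ge_0_iff_ge)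
  also have "\<dots> \<le> (1 - \<sigma>) * e + \<sigma> * e"
    using assms by (intro add_mono mult_left_mono) auto
  finally show ?thesis
    by (simp add: algebra_simps)
qed

lemma time_glue_approx:
  assumes close: "\<And>n x t. x \<in> U \<Longrightarrow> t \<in> {real n..real n + 2} \<Longrightarrow> \<bar>\<Phi> n (t, x) - \<phi> (t, x)\<bar> \<le> e"
    and "x \<in> U" "0 \<le> t"
  shows "\<bar>time_glue \<Phi> (t, x) - \<phi> (t, x)\<bar> \<le> e"
proof -
  define n where "n = nat \<lfloor>t\<rfloor>"
  have "real n \<le> t" "t < real n + 1"
    using nat_floor_bounds[OF \<open>0 \<le> t\<close>] by (simp_all add: n_def)
  then have "t \<in> {real (n - 1)..real (n - 1) + 2}" "t \<in> {real n..real n + 2}"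
    by (cases n; auto)+
  then have "\<bar>\<Phi> (n - 1) (t, x) - \<phi> (t, x)\<bar> \<le> e" "\<bar>\<Phi> n (t, x) - \<phi> (t, x)\<bar> \<le> e"
    using close \<open>x \<in> U\<close> by blast+
  then show ?thesis
    unfolding time_glue_def blend_def fst_conv n_def[symmetric]
    by (intro convex_combination_close smooth_step_bounds)
qed

lemma C1_nonincreasing_approx:
  fixes \<phi> :: "real \<times> 'a::euclidean_space \<Rightarrow> real"
  assumes "open U" "continuous_on ({0..} \<times> U) \<phi>"
    and \<phi>_mono: "\<And>x s t. x \<in> U \<Longrightarrow> 0 \<le> s \<Longrightarrow> s \<le> t \<Longrightarrow> \<phi> (t, x) \<le> \<phi> (s, x)"
    and "0 < e"
  shows "\<exists>\<psi> \<psi>'. has_C1_derivative \<psi> \<psi>' ({0..} \<times> U)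
           \<and> (\<forall>x\<in>U. \<forall>s t. 0 \<le> s \<longrightarrow> s \<le> t \<longrightarrow> \<psi> (t, x) \<le> \<psi> (s, x))
           \<and> (\<forall>x\<in>U. \<forall>t\<ge>0. \<bar>\<psi> (t, x) - \<phi> (t, x)\<bar> \<le> e)"
proof -
  define h where "h k = e / 4 * (1/2)^k" for k :: nat
  have h: "0 < h k" "h k \<le> e / 4" "h (Suc k) = h k / 2" for k
    using \<open>0 < e\<close> by (auto simp: h_def power_le_one)
  have "\<forall>k. \<exists>L L'. has_C1_derivative L L' ({0..real k + 3} \<times> U)
      \<and> (\<forall>x\<in>U. \<forall>s t. 0 \<le> s \<longrightarrow> s \<le> t \<longrightarrow> t \<le> real k + 3 \<longrightarrow> L (t, x) \<le> L (s, x))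
      \<and> (\<forall>x\<in>U. \<forall>t\<in>{real k..real k + 2}. \<bar>L (t, x) - \<phi> (t, x)\<bar> \<le> h k)"
    using assms h(1) by (intro allI C1_nonincreasing_approx_on_strip) auto
  then obtain L L' where L_C1: "\<And>k. has_C1_derivative (L k) (L' k) ({0..real k + 3} \<times> U)"
    and L_mono: "\<And>k x s t. x \<in> U \<Longrightarrow> 0 \<le> s \<Longrightarrow> s \<le> t \<Longrightarrow> t \<le> real k + 3 \<Longrightarrow> L k (t, x) \<le> L k (s, x)"
    and L_close: "\<And>k x t. x \<in> U \<Longrightarrow> t \<in> {real k..real k + 2} \<Longrightarrow> \<bar>L k (t, x) - \<phi> (t, x)\<bar> \<le> h k"
    by metis
  \<comment> \<open>The shift orders consecutive layers on their overlap [k + 1, k + 2].\<close>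
  define \<Phi> where "\<Phi> k p = L k p + 3 * h k" for k p
  have "has_C1_derivative (\<Phi> k) (L' k) ({0..real k + 3} \<times> U)" for k
    unfolding \<Phi>_def[abs_def] by (intro has_C1_derivative_add_const L_C1)
  moreover have "\<Phi> k (t, x) \<le> \<Phi> k (s, x)" if "x \<in> U" "0 \<le> s" "s \<le> t" "t \<le> real k + 3" for k x s t
    using L_mono[OF that] by (simp add: \<Phi>_def)
  moreover have "\<Phi> (Suc k) (t, x) \<le> \<Phi> k (t, x)" if "x \<in> U" "t \<in> {real k + 1..real k + 2}" for k x t
    using L_close[where k="Suc k" and x=x and t=t] L_close[where k=k and x=x and t=t] that h(3)[of k]
    unfolding \<Phi>_def abs_le_iff by auto
  moreover have "\<bar>\<Phi> k (t, x) - \<phi> (t, x)\<bar> \<le> e" if "x \<in> U" "t \<in> {real k..real k + 2}" for k x t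
    using L_close[OF that] h(1,2)[of k] unfolding \<Phi>_def abs_le_iff by auto
  ultimately show ?thesis
    by (intro exI[of _ "time_glue \<Phi>"] exI[of _ "time_glue' \<Phi> L'"] conjI ballI allI impI
        has_C1_derivative_time_glue time_glue_antimono time_glue_approx) auto
qed

lemma continuous_on_dominated_by_vanishing:
  fixes f g :: "'a::t2_space \<Rightarrow> real"
  assumes "open V" "continuous_on (S \<inter> V) f" "continuous_on S g"
    and dominated: "\<And>p. p \<in> S \<Longrightarrow> 0 \<le> f p \<and> f p \<le> g p"
    and vanishing: "\<And>p. p \<in> S - V \<Longrightarrow> g p = 0"
  shows "continuous_on S f"
proof -
  have "continuous (at p within S) f" if "p \<in> S" for p
  proof (cases "p \<in> V")
    case True
    then have "at p within S \<inter> V = at p within S"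
      using \<open>open V\<close> by (intro at_within_nhd[of p V]) auto
    then show ?thesis
      using assms(2) \<open>p \<in> S\<close> True by (metis IntI continuous_on_eq_continuous_within)
  next
    case False
    then have "g p = 0" "f p = 0"
      using vanishing dominated[OF \<open>p \<in> S\<close>] \<open>p \<in> S\<close> by force+
    have "(g \<longlongrightarrow> g p) (at p within S)"
      using assms(3) \<open>p \<in> S\<close> by (simp add: continuous_on_def)
    moreover have "\<forall>\<^sub>F q in at p within S. 0 \<le> f q" "\<forall>\<^sub>F q in at p within S. f q \<le> g q"
      using dominated by (auto simp: eventually_at_filter)
    ultimately have "(f \<longlongrightarrow> 0) (at p within S)"
      using tendsto_sandwich[OF _ _ tendsto_const] \<open>g p = 0\<close> by metis
    then show ?thesis
      using \<open>f p = 0\<close> by (simp add: continuous_within)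
  qed
  then show ?thesis
    by (simp add: continuous_on_eq_continuous_within)
qed

lemma ln_nonincreasing_C1_approx:
  fixes h :: "real \<Rightarrow> 'a::euclidean_space \<Rightarrow> real"
  assumes "closed K" and h_cont: "continuous_on ({0..} \<times> UNIV) (\<lambda>(t, x). h t x)"
    and h_pos: "\<And>t x. 0 \<le> t \<Longrightarrow> x \<notin> K \<Longrightarrow> 0 < h t x"
    and h_mono: "\<And>x s t. 0 \<le> s \<Longrightarrow> s \<le> t \<Longrightarrow> h t x \<le> h s x"
  shows "\<exists>\<psi> \<psi>'. has_C1_derivative \<psi> \<psi>' ({0..} \<times> (UNIV - K))
           \<and> (\<forall>x s t. x \<notin> K \<longrightarrow> 0 \<le> s \<longrightarrow> s \<le> t \<longrightarrow> \<psi> (t, x) \<le> \<psi> (s, x))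
           \<and> (\<forall>t x. 0 \<le> t \<longrightarrow> x \<notin> K \<longrightarrow> \<bar>\<psi> (t, x) - ln (h t x)\<bar> \<le> 1/2)"
proof -
  have "continuous_on ({0..} \<times> (UNIV - K)) (\<lambda>p. h (fst p) (snd p))"
    by (rule continuous_on_subset[OF h_cont[unfolded case_prod_unfold]]) auto
  moreover have "h (fst p) (snd p) \<noteq> 0" if "p \<in> {0..} \<times> (UNIV - K)" for p
    using h_pos[of "fst p" "snd p"] that by (auto simp: mem_Times_iff)
  ultimately have "continuous_on ({0..} \<times> (UNIV - K)) (\<lambda>p. ln (h (fst p) (snd p)))"
    by (intro continuous_on_ln) auto
  moreover have "ln (h t x) \<le> ln (h s x)" if "x \<in> UNIV - K" "0 \<le> s" "s \<le> t" for x s t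
    using h_mono[OF that(2,3)] h_pos that by simp
  moreover have "open (UNIV - K)"
    using \<open>closed K\<close> by (simp add: open_Diff)
  ultimately show ?thesis
    using C1_nonincreasing_approx[of "UNIV - K" "\<lambda>p. ln (h (fst p) (snd p))" "1/2"] by auto
qed

lemma exp_close_to_ln:
  fixes y z :: real
  assumes "0 < y" "\<bar>z - ln y\<bar> \<le> 1/2"
  shows "y / 2 \<le> exp z" "exp z \<le> 2 * y"
proof -
  have z: "ln y - 1/2 \<le> z" "z \<le> ln y + 1/2"
    using assms(2)[unfolded abs_le_iff] by linarith+
  have "y = exp (ln y - 1/2) * exp (1/2)"
    using assms(1) by (simp add: exp_diff)
  also have "\<dots> \<le> exp z * 2"
    using z exp_half_le2 by (intro mult_mono) auto
  finally show "y / 2 \<le> exp z"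
    by simp
  have "exp z \<le> exp (ln y + 1/2)"
    using z by simp
  also have "\<dots> = y * exp (1/2)"
    using assms(1) by (simp add: exp_add)
  also have "\<dots> \<le> y * 2"
    using assms(1) exp_half_le2 by (intro mult_left_mono) auto
  finally show "exp z \<le> 2 * y"
    by simp
qed

lemma exp_extension_by_zero:
  fixes h :: "real \<Rightarrow> 'a::euclidean_space \<Rightarrow> real"
  assumes "closed K" and h_cont: "continuous_on ({0..} \<times> UNIV) (\<lambda>(t, x). h t x)"
    and h_nonneg: "\<And>t x. 0 \<le> t \<Longrightarrow> 0 \<le> h t x"
    and h_zero: "\<And>t x. 0 \<le> t \<Longrightarrow> h t x = 0 \<longleftrightarrow> x \<in> K"
    and \<psi>_cont: "continuous_on ({0..} \<times> (UNIV - K)) \<psi>"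
    and \<psi>_close: "\<forall>t x. 0 \<le> t \<longrightarrow> x \<notin> K \<longrightarrow> \<bar>\<psi> (t, x) - ln (h t x)\<bar> \<le> 1/2"
    and g_def: "\<And>t x. g t x = (if x \<in> K then 0 else exp (\<psi> (t, x)))"
  shows "continuous_on ({0..} \<times> UNIV) (\<lambda>(t, x). g t x)"
    and "0 \<le> t \<Longrightarrow> h t x / 2 \<le> g t x \<and> g t x \<le> 2 * h t x"
proof -
  have bounds: "h t x / 2 \<le> g t x \<and> g t x \<le> 2 * h t x" if "0 \<le> t" for t x
  proof (cases "x \<in> K")
    case True
    then have "h t x = 0"
      using h_zero[OF that] by blast
    with True show ?thesis
      by (simp add: g_def)
  next
    case False
    then have "0 < h t x"
      using h_nonneg[OF that, of x] h_zero[OF that, of x] by simp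
    then show ?thesis
      using exp_close_to_ln \<psi>_close that False by (simp add: g_def)
  qed
  then show "0 \<le> t \<Longrightarrow> h t x / 2 \<le> g t x \<and> g t x \<le> 2 * h t x" .
  show "continuous_on ({0..} \<times> UNIV) (\<lambda>(t, x). g t x)"
  proof (rule continuous_on_dominated_by_vanishing[where V="UNIV \<times> (UNIV - K)" and g="\<lambda>(t, x). 2 * h t x"])
    show "open (UNIV \<times> (UNIV - K))"
      using \<open>closed K\<close> by (auto simp: open_Times open_Diff)
    have "continuous_on ({0..} \<times> (UNIV - K)) (\<lambda>p. exp (\<psi> p))"
      using \<psi>_cont by (intro continuous_intros)
    then show "continuous_on ({0..} \<times> UNIV \<inter> UNIV \<times> (UNIV - K)) (\<lambda>(t, x). g t x)"
      unfolding Times_Int_Times Int_UNIV_left Int_UNIV_right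
      by (rule continuous_on_eq) (auto simp: g_def)
    show "continuous_on ({0..} \<times> UNIV) (\<lambda>(t, x). 2 * h t x)"
      using h_cont by (auto simp: case_prod_unfold intro!: continuous_intros)
  qed (use bounds h_nonneg h_zero in \<open>auto simp: g_def\<close>)
qed

theorem lemma4:
  fixes h :: "real \<Rightarrow> 'a::euclidean_space \<Rightarrow> real" and K :: "'a set"
  assumes h_cont: "continuous_on ({0..} \<times> UNIV) (\<lambda>(t, x). h t x)"
    and h_nonneg: "\<And>t x. t \<ge> 0 \<Longrightarrow> h t x \<ge> 0"
    and K_closed: "closed K"
    and h_zero: "\<And>t x. t \<ge> 0 \<Longrightarrow> h t x = 0 \<longleftrightarrow> x \<in> K"
    and h_mono: "\<And>x s t. 0 \<le> s \<Longrightarrow> s \<le> t \<Longrightarrow> h t x \<le> h s x"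
  shows "\<exists>g :: real \<Rightarrow> 'a \<Rightarrow> real.
           continuous_on ({0..} \<times> UNIV) (\<lambda>(t, x). g t x)
         \<and> (\<forall>t x. t \<ge> 0 \<longrightarrow> g t x \<ge> 0)
         \<and> (\<exists>g' :: real \<times> 'a \<Rightarrow> (real \<times> 'a) \<Rightarrow>\<^sub>L real.
               (\<forall>p \<in> {0..} \<times> (UNIV - K).
                  ((\<lambda>(t, x). g t x) has_derivative blinfun_apply (g' p))
                    (at p within {0..} \<times> (UNIV - K)))
             \<and> continuous_on ({0..} \<times> (UNIV - K)) g')
         \<and> (\<forall>t x. t \<ge> 0 \<longrightarrow> h t x / 2 \<le> g t x \<and> g t x \<le> 2 * h t x)
         \<and> (\<forall>x s t. 0 \<le> s \<longrightarrow> s \<le> t \<longrightarrow> g t x \<le> g s x)"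
proof -
  have h_pos: "0 < h t x" if "0 \<le> t" "x \<notin> K" for t x
    using h_nonneg[OF that(1), of x] h_zero[OF that(1), of x] that(2) by simp
  obtain \<psi> \<psi>' where \<psi>_C1: "has_C1_derivative \<psi> \<psi>' ({0..} \<times> (UNIV - K))"
    and \<psi>_mono: "\<forall>x s t. x \<notin> K \<longrightarrow> 0 \<le> s \<longrightarrow> s \<le> t \<longrightarrow> \<psi> (t, x) \<le> \<psi> (s, x)"
    and \<psi>_close: "\<forall>t x. 0 \<le> t \<longrightarrow> x \<notin> K \<longrightarrow> \<bar>\<psi> (t, x) - ln (h t x)\<bar> \<le> 1/2"
    using ln_nonincreasing_C1_approx[OF K_closed h_cont h_pos h_mono] by blast
  define g where "g t x = (if x \<in> K then 0 else exp (\<psi> (t, x)))" for t x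
  have "has_C1_derivative (\<lambda>(t, x). g t x) (\<lambda>p v. exp (\<psi> p) * \<psi>' p v) ({0..} \<times> (UNIV - K))"
    by (rule has_C1_derivative_cong[OF has_C1_derivative_exp[OF \<psi>_C1]]) (auto simp: g_def)
  note g_C1 = has_C1_derivative_imp_blinfun[OF this]
  note extension_hyps = K_closed h_cont h_nonneg h_zero has_C1_derivative_imp_continuous_on[OF \<psi>_C1]
    \<psi>_close g_def
  have g_bounds: "h t x / 2 \<le> g t x \<and> g t x \<le> 2 * h t x" if "0 \<le> t" for t x
    by (rule exp_extension_by_zero(2)[OF _ _ _ _ _ _ _ that]) (fact extension_hyps)+
  show ?thesis
  proof (intro exI[of _ g] conjI allI impI)
    show "continuous_on ({0..} \<times> UNIV) (\<lambda>(t, x). g t x)"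
      by (rule exp_extension_by_zero(1)) (fact extension_hyps)+
    show "h t x / 2 \<le> g t x" "g t x \<le> 2 * h t x" if "0 \<le> t" for t x
      using g_bounds[OF that] by simp_all
    show "0 \<le> g t x" if "0 \<le> t" for t x
      using g_bounds[OF that, of x] h_nonneg[OF that, of x] by linarith
    show "g t x \<le> g s x" if "0 \<le> s" "s \<le> t" for x s t
      using \<psi>_mono that by (simp add: g_def)
  qed (use g_C1 in blast)
qed

end
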